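(* For $\mathfrak{g}=\mathfrak{sl}_2(\mathbb{C})$ we have $\operatorname{QDer}(\mathfrak{g})=\operatorname{End}(\mathfrak{g})$; that is, for every linear map $\phi:\mathfrak{g}\to\mathfrak{g}$ there is a linear map $\tau:\mathfrak{g}\to\mathfrak{g}$ with $\tau([x,y])=[\phi(x),y]+[x,\phi(y)]$ for all $x,y\in\mathfrak{g}$.
   Context: The space of quasiderivations of a Lie algebra $\mathfrak{g}$ is $\operatorname{QDer}(\mathfrak{g})=\{\phi\in\operatorname{End}(\mathfrak{g})\mid\exists\,\tau\in\operatorname{End}(\mathfrak{g})\text{ with }\tau([x,y])=[\phi(x),y]+[x,\phi(y)]\ \forall x,y\in\mathfrak{g}\}$. *)

theory Defs
  imports "HOL-Analysis.Analysis"
begin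

definition tr2 :: "complex^2^2 \<Rightarrow> complex" where
  "tr2 A = A $ 1 $ 1 + A $ 2 $ 2"

definition sl2 :: "(complex^2^2) set" where
  "sl2 = {A. tr2 A = 0}"

definition lie_br :: "complex^2^2 \<Rightarrow> complex^2^2 \<Rightarrow> complex^2^2" where
  "lie_br A B = A ** B - B ** A"

definition msc :: "complex \<Rightarrow> complex^2^2 \<Rightarrow> complex^2^2" where
  "msc c A = (\<chi> i j. c * A $ i $ j)"

text \<open>A complex-linear endomorphism of sl2 (values outside sl2 are irrelevant).\<close>
definition sl2_End :: "(complex^2^2 \<Rightarrow> complex^2^2) \<Rightarrow> bool" where
  "sl2_End f \<longleftrightarrow> (\<forall>x\<in>sl2. f x \<in> sl2) \<and>
     (\<forall>x\<in>sl2. \<forall>y\<in>sl2. f (x + y) = f x + f y) \<and>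
     (\<forall>c::complex. \<forall>x\<in>sl2. f (msc c x) = msc c (f x))"

end

theory Submission
  imports Defs
begin

text \<open>The map \<open>D x y = [\<phi> x, y] + [x, \<phi> y]\<close> is bilinear and alternating. On \<open>sl\<^sub>2\<close> the
  bracket identifies \<open>\<Lambda>\<^sup>2 sl\<^sub>2\<close> with \<open>sl\<^sub>2\<close> (both have dimension 3, and
  \<open>[h,e] = 2e\<close>, \<open>[h,f] = -2f\<close>, \<open>[e,f] = h\<close>), so every alternating bilinear map on
  \<open>sl\<^sub>2\<close> factors through the bracket via a linear map \<open>\<tau>\<close>.\<close>

definition mat2 :: "complex \<Rightarrow> complex \<Rightarrow> complex \<Rightarrow> complex \<Rightarrow> complex^2^2" where
  "mat2 a b c d = (\<chi> i j. if i = 1 then (if j = 1 then a else b) else (if j = 1 then c else d))"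

definition sl2_h :: "complex^2^2" where "sl2_h = mat2 1 0 0 (-1)"
definition sl2_e :: "complex^2^2" where "sl2_e = mat2 0 1 0 0"
definition sl2_f :: "complex^2^2" where "sl2_f = mat2 0 0 1 0"

lemma mat2_nth [simp]:
  "mat2 a b c d $ 1 $ 1 = a" "mat2 a b c d $ 1 $ 2 = b"
  "mat2 a b c d $ 2 $ 1 = c" "mat2 a b c d $ 2 $ 2 = d"
  by (simp_all add: mat2_def)

lemma sl2_iff: "x \<in> sl2 \<longleftrightarrow> x $ 2 $ 2 = - x $ 1 $ 1"
  by (auto simp: sl2_def tr2_def eq_neg_iff_add_eq_0 add.commute)

lemma sl2_basis [simp]: "sl2_h \<in> sl2" "sl2_e \<in> sl2" "sl2_f \<in> sl2"
  by (simp_all add: sl2_iff sl2_h_def sl2_e_def sl2_f_def)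

lemma add_sl2: "a \<in> sl2 \<Longrightarrow> b \<in> sl2 \<Longrightarrow> a + b \<in> sl2"
  by (simp add: sl2_iff)

lemma msc_sl2: "a \<in> sl2 \<Longrightarrow> msc c a \<in> sl2"
  by (simp add: sl2_iff msc_def)

lemma lie_br_sl2 [simp]: "lie_br a b \<in> sl2"
  by (simp add: sl2_def tr2_def lie_br_def matrix_matrix_mult_def sum_2)

lemma sl2_decomp:
  "x \<in> sl2 \<Longrightarrow> x = msc (x$1$1) sl2_h + msc (x$1$2) sl2_e + msc (x$2$1) sl2_f"
  by (simp add: sl2_iff vec_eq_iff forall_2 msc_def sl2_h_def sl2_e_def sl2_f_def)

lemma msc_add_right: "msc c (a + b) = msc c a + msc c b"
  and lie_br_add_left: "lie_br (a + b) z = lie_br a z + lie_br b z"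
  and lie_br_msc_left: "lie_br (msc c a) b = msc c (lie_br a b)"
  and lie_br_msc_right: "lie_br a (msc c b) = msc c (lie_br a b)"
  and lie_br_antisym: "lie_br b a = - lie_br a b"
  by (simp_all add: msc_def vec_eq_iff lie_br_def matrix_matrix_mult_def sum_2 algebra_simps)

definition sl2_alternating :: "(complex^2^2 \<Rightarrow> complex^2^2 \<Rightarrow> complex^2^2) \<Rightarrow> bool" where
  "sl2_alternating D \<longleftrightarrow>
     (\<forall>x\<in>sl2. \<forall>y\<in>sl2. \<forall>z\<in>sl2. D (x + y) z = D x z + D y z) \<and>
     (\<forall>c. \<forall>x\<in>sl2. \<forall>y\<in>sl2. D (msc c x) y = msc c (D x y)) \<and>
     (\<forall>x\<in>sl2. \<forall>y\<in>sl2. D y x = - D x y)"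

lemma sl2_alternating_expand:
  assumes "sl2_alternating D" "x \<in> sl2" "y \<in> sl2"
  shows "D x y = msc (x$1$1 * y$1$2 - x$1$2 * y$1$1) (D sl2_h sl2_e)
               + msc (x$1$1 * y$2$1 - x$2$1 * y$1$1) (D sl2_h sl2_f)
               + msc (x$1$2 * y$2$1 - x$2$1 * y$1$2) (D sl2_e sl2_f)"
proof -
  have add: "\<And>x y z. x \<in> sl2 \<Longrightarrow> y \<in> sl2 \<Longrightarrow> z \<in> sl2 \<Longrightarrow> D (x + y) z = D x z + D y z"
    and scale: "\<And>c x y. x \<in> sl2 \<Longrightarrow> y \<in> sl2 \<Longrightarrow> D (msc c x) y = msc c (D x y)"
    and skew: "\<And>x y. x \<in> sl2 \<Longrightarrow> y \<in> sl2 \<Longrightarrow> D y x = - D x y"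
    using assms(1) unfolding sl2_alternating_def by blast+
  have left: "D u z = msc (u$1$1) (D sl2_h z) + msc (u$1$2) (D sl2_e z) + msc (u$2$1) (D sl2_f z)"
    if "u \<in> sl2" "z \<in> sl2" for u z
    by (subst sl2_decomp[OF that(1)]) (simp add: add scale that add_sl2 msc_sl2)
  have diag: "D b b = 0" if "b \<in> sl2" for b
    using skew[OF that that] by (simp add: vec_eq_iff)
  have right: "D b y = - (msc (y$1$1) (D sl2_h b) + msc (y$1$2) (D sl2_e b) + msc (y$2$1) (D sl2_f b))"
    if "b \<in> sl2" for b
    using skew[OF that assms(3)] left[OF assms(3) that] by simp
  show ?thesis
    using left[OF assms(2,3)]
    by (simp add: right diag skew[of sl2_h sl2_e] skew[of sl2_h sl2_f] skew[of sl2_e sl2_f])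
       (simp add: msc_def vec_eq_iff algebra_simps)
qed

lemma lie_br_sl2_coords:
  assumes "x \<in> sl2" "y \<in> sl2"
  shows "lie_br x y $ 1 $ 1 = x$1$2 * y$2$1 - x$2$1 * y$1$2"
    and "lie_br x y $ 1 $ 2 = 2 * (x$1$1 * y$1$2 - x$1$2 * y$1$1)"
    and "lie_br x y $ 2 $ 1 = 2 * (x$2$1 * y$1$1 - x$1$1 * y$2$1)"
  using assms by (simp_all add: sl2_iff lie_br_def matrix_matrix_mult_def sum_2 algebra_simps)

lemma sl2_alternating_factors_through_bracket:
  assumes "sl2_alternating D" and D_sl2: "\<forall>x\<in>sl2. \<forall>y\<in>sl2. D x y \<in> sl2"
  shows "\<exists>\<tau>. sl2_End \<tau> \<and> (\<forall>x\<in>sl2. \<forall>y\<in>sl2. \<tau> (lie_br x y) = D x y)"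
proof -
  define \<tau> where "\<tau> (z::complex^2^2) = msc (z$1$1) (D sl2_e sl2_f) + msc (z$1$2 / 2) (D sl2_h sl2_e)
                         - msc (z$2$1 / 2) (D sl2_h sl2_f)" for z
  have "sl2_End \<tau>"
    unfolding sl2_End_def
  proof (intro conjI ballI allI)
    fix x :: "complex^2^2"
    have "- msc (x$2$1 / 2) (D sl2_h sl2_f) = msc (- (x$2$1 / 2)) (D sl2_h sl2_f)"
      by (simp add: msc_def vec_eq_iff)
    then show "\<tau> x \<in> sl2"
      unfolding \<tau>_def diff_conv_add_uminus using D_sl2 by (simp add: add_sl2 msc_sl2)
  next
    fix x y :: "complex^2^2"
    show "\<tau> (x + y) = \<tau> x + \<tau> y"
      unfolding \<tau>_def by (simp add: msc_def vec_eq_iff algebra_simps add_divide_distrib)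
  next
    fix c and x :: "complex^2^2"
    show "\<tau> (msc c x) = msc c (\<tau> x)"
      unfolding \<tau>_def by (simp add: msc_def vec_eq_iff algebra_simps)
  qed
  moreover have "\<tau> (lie_br x y) = D x y" if "x \<in> sl2" "y \<in> sl2" for x y
    unfolding \<tau>_def sl2_alternating_expand[OF assms(1) that] lie_br_sl2_coords[OF that]
    by (simp add: msc_def vec_eq_iff field_simps)
  ultimately show ?thesis by blast
qed

lemma sl2_alternating_bracket_derivation:
  assumes "sl2_End \<phi>"
  shows "sl2_alternating (\<lambda>x y. lie_br (\<phi> x) y + lie_br x (\<phi> y))"
proof -
  have add: "\<phi> (x + y) = \<phi> x + \<phi> y" and scale: "\<phi> (msc c x) = msc c (\<phi> x)"
    if "x \<in> sl2" "y \<in> sl2" for x y c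
    using assms that unfolding sl2_End_def by blast+
  show ?thesis
    unfolding sl2_alternating_def
  proof (intro conjI ballI allI)
    fix x y z assume "x \<in> sl2" "y \<in> sl2" "z \<in> sl2"
    then show "lie_br (\<phi> (x + y)) z + lie_br (x + y) (\<phi> z)
             = lie_br (\<phi> x) z + lie_br x (\<phi> z) + (lie_br (\<phi> y) z + lie_br y (\<phi> z))"
      by (simp add: add lie_br_add_left)
  next
    fix c x y assume "x \<in> sl2" "y \<in> sl2"
    then show "lie_br (\<phi> (msc c x)) y + lie_br (msc c x) (\<phi> y)
             = msc c (lie_br (\<phi> x) y + lie_br x (\<phi> y))"
      by (simp add: scale lie_br_msc_left lie_br_msc_right msc_add_right)
  next
    fix x y
    show "lie_br (\<phi> y) x + lie_br y (\<phi> x) = - (lie_br (\<phi> x) y + lie_br x (\<phi> y))"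
      using lie_br_antisym[of x "\<phi> y"] lie_br_antisym[of "\<phi> x" y] by simp
  qed
qed

theorem proposition5p10:
  fixes \<phi> :: "complex^2^2 \<Rightarrow> complex^2^2"
  assumes "sl2_End \<phi>"
  shows "\<exists>\<tau>. sl2_End \<tau> \<and>
           (\<forall>x\<in>sl2. \<forall>y\<in>sl2. \<tau> (lie_br x y) = lie_br (\<phi> x) y + lie_br x (\<phi> y))"
  using sl2_alternating_factors_through_bracket[OF sl2_alternating_bracket_derivation[OF assms]]
  by (simp add: add_sl2)

end
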